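(* For every $k\in[K]$, \textsc{Min-Quant}$(k)$~$1|prec|\max w_jT_j$ (minimizing over $\pi\in\Pi$ the $k$th largest value among $f(\pi,S_1),\dots,f(\pi,S_K)$) is solvable in $O\!\left(\binom{K}{k-1}(K-k+1)n^2\right)$ time; in particular it is polynomially solvable when $k$ is a constant.
   Context: Single machine scheduling under scenarios. A set of jobs $J=\{1,\dots,n\}$ must be processed nonpreemptively on one machine, all jobs being available at time $0$; jobs may be subject to precedence constraints given by a partial order ($i\rightarrow j$ means job $j$ cannot start before job $i$ is completed). A schedule is a permutation $\pi$ of $J$ respecting the precedence constraints; $\Pi$ denotes the set of all schedules. A scenario set $\Gamma=\{S_1,\dots,S_K\}$, $K>1$, is given (part of the input); under scenario $S_i$ job $j$ has a nonnegative processing time $p_j(S_i)$, nonnegative due date $d_j(S_i)$ and nonnegative weight $w_j(S_i)$. $C_j(\pi,S_i)$ is the completion time of $j$ in $\pi$ under $S_i$, i.e. the sum of $p_k(S_i)$ over $k=j$ and all jobs $k$ preceding $j$ in $\pi$. The cost of $\pi$ under $S_i$ is $f(\pi,S_i)=\max_{j\in J} w_j(S_i)[C_j(\pi,S_i)-d_j(S_i)]^+$, where $[x]^+=\max\{0,x\}$. *)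

theory Defs
  imports Complex_Main "HOL-Library.Time_Functions"
begin

text \<open>Jobs are 0,...,n-1 and scenarios are 0,...,K-1.  Data of an instance:
  p s j, d s j, w s j : processing time, due date, weight of job j under scenario s;
  prec i j : precedence constraint i -> j (job j cannot start before job i is completed).\<close>

definition valid_instance ::
  "nat \<Rightarrow> nat \<Rightarrow> (nat \<Rightarrow> nat \<Rightarrow> real) \<Rightarrow> (nat \<Rightarrow> nat \<Rightarrow> real) \<Rightarrow> (nat \<Rightarrow> nat \<Rightarrow> real)
   \<Rightarrow> (nat \<Rightarrow> nat \<Rightarrow> bool) \<Rightarrow> bool" where
  "valid_instance n K p d w prec \<longleftrightarrow>
     1 \<le> n \<and> 1 < K \<and>
     (\<forall>s<K. \<forall>j<n. 0 \<le> p s j \<and> 0 \<le> d s j \<and> 0 \<le> w s j) \<and>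
     (\<forall>i<n. \<not> prec i i) \<and>
     (\<forall>i<n. \<forall>j<n. \<forall>l<n. prec i j \<and> prec j l \<longrightarrow> prec i l)"

definition schedules :: "nat \<Rightarrow> (nat \<Rightarrow> nat \<Rightarrow> bool) \<Rightarrow> nat list set" where
  "schedules n prec = {\<pi>. distinct \<pi> \<and> set \<pi> = {0..<n} \<and>
      (\<forall>a b. a < b \<and> b < length \<pi> \<longrightarrow> \<not> prec (\<pi> ! b) (\<pi> ! a))}"

definition completion :: "(nat \<Rightarrow> nat \<Rightarrow> real) \<Rightarrow> nat list \<Rightarrow> nat \<Rightarrow> nat \<Rightarrow> real" where
  "completion p \<pi> s j = sum_list (map (p s) (takeWhile (\<lambda>i. i \<noteq> j) \<pi> @ [j]))"

definition sched_cost ::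
  "nat \<Rightarrow> (nat \<Rightarrow> nat \<Rightarrow> real) \<Rightarrow> (nat \<Rightarrow> nat \<Rightarrow> real) \<Rightarrow> (nat \<Rightarrow> nat \<Rightarrow> real)
   \<Rightarrow> nat list \<Rightarrow> nat \<Rightarrow> real" where
  "sched_cost n p d w \<pi> s = Max ((\<lambda>j. w s j * max 0 (completion p \<pi> s j - d s j)) ` {0..<n})"

text \<open>k-th largest element of a list (1 \<le> k \<le> length xs).\<close>
definition kth_largest :: "nat \<Rightarrow> real list \<Rightarrow> real" where
  "kth_largest k xs = rev (sort xs) ! (k - 1)"

definition quant_obj ::
  "nat \<Rightarrow> nat \<Rightarrow> nat \<Rightarrow> (nat \<Rightarrow> nat \<Rightarrow> real) \<Rightarrow> (nat \<Rightarrow> nat \<Rightarrow> real) \<Rightarrow> (nat \<Rightarrow> nat \<Rightarrow> real)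
   \<Rightarrow> nat list \<Rightarrow> real" where
  "quant_obj n K k p d w \<pi> = kth_largest k (map (sched_cost n p d w \<pi>) [0..<K])"

definition minquant_optimal ::
  "nat \<Rightarrow> nat \<Rightarrow> nat \<Rightarrow> (nat \<Rightarrow> nat \<Rightarrow> real) \<Rightarrow> (nat \<Rightarrow> nat \<Rightarrow> real) \<Rightarrow> (nat \<Rightarrow> nat \<Rightarrow> real)
   \<Rightarrow> (nat \<Rightarrow> nat \<Rightarrow> bool) \<Rightarrow> nat list \<Rightarrow> bool" where
  "minquant_optimal n K k p d w prec \<pi> \<longleftrightarrow>
     \<pi> \<in> schedules n prec \<and>
     (\<forall>\<pi>' \<in> schedules n prec. quant_obj n K k p d w \<pi> \<le> quant_obj n K k p d w \<pi>')"

text \<open>All subsets of size m of the list xs (l = length xs), as lists.\<close>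
fun consall :: "nat \<Rightarrow> nat list list \<Rightarrow> nat list list" where
  "consall x [] = []"
| "consall x (ys # yss) = (x # ys) # consall x yss"

fun combs :: "nat \<Rightarrow> nat \<Rightarrow> nat list \<Rightarrow> nat list list" where
  "combs 0 l xs = [[]]"
| "combs (Suc m) l [] = []"
| "combs (Suc m) l (x # xs) =
     (if l < Suc m then [] else consall x (combs m (l - 1) xs) @ combs (Suc m) (l - 1) xs)"

fun rng :: "nat \<Rightarrow> nat list" where
  "rng 0 = []"
| "rng (Suc i) = i # rng i"

text \<open>Remaining jobs are kept as pairs (job, number of its successors among remaining jobs).\<close>
fun cnt :: "(nat \<Rightarrow> nat \<Rightarrow> bool) \<Rightarrow> nat \<Rightarrow> nat \<Rightarrow> nat" where
  "cnt pr j 0 = 0"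
| "cnt pr j (Suc i) = (if pr j i then Suc (cnt pr j i) else cnt pr j i)"

fun mkU :: "(nat \<Rightarrow> nat \<Rightarrow> bool) \<Rightarrow> nat \<Rightarrow> nat \<Rightarrow> (nat \<times> nat) list" where
  "mkU pr n 0 = []"
| "mkU pr n (Suc i) = (i, cnt pr i n) # mkU pr n i"

fun sumP :: "(nat \<Rightarrow> nat \<Rightarrow> real) \<Rightarrow> nat \<Rightarrow> (nat \<times> nat) list \<Rightarrow> real" where
  "sumP p s [] = 0"
| "sumP p s ((j, c) # U) = p s j + sumP p s U"

fun psums :: "(nat \<Rightarrow> nat \<Rightarrow> real) \<Rightarrow> nat list \<Rightarrow> (nat \<times> nat) list \<Rightarrow> (nat \<times> real) list" where
  "psums p [] U = []"
| "psums p (s # R) U = (s, sumP p s U) # psums p R U"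

fun gval :: "(nat \<Rightarrow> nat \<Rightarrow> real) \<Rightarrow> (nat \<Rightarrow> nat \<Rightarrow> real) \<Rightarrow> nat \<Rightarrow> (nat \<times> real) list \<Rightarrow> real" where
  "gval w d j [] = 0"
| "gval w d j ((s, P) # PS) = max (w s j * max 0 (P - d s j)) (gval w d j PS)"

fun bestj :: "(nat \<Rightarrow> nat \<Rightarrow> real) \<Rightarrow> (nat \<Rightarrow> nat \<Rightarrow> real) \<Rightarrow> (nat \<times> real) list
    \<Rightarrow> (nat \<times> nat) list \<Rightarrow> (nat \<times> real) option" where
  "bestj w d PS [] = None"
| "bestj w d PS ((j, c) # U) =
     (let r = bestj w d PS U in
      if c = 0 then
        (let g = gval w d j PS in
         case r of None \<Rightarrow> Some (j, g)
         | Some (j', g') \<Rightarrow> if g \<le> g' then Some (j, g) else Some (j', g'))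
      else r)"

fun pick :: "(nat \<Rightarrow> nat \<Rightarrow> bool) \<Rightarrow> nat \<Rightarrow> (nat \<times> nat) list \<Rightarrow> (nat \<times> nat) list" where
  "pick pr j [] = []"
| "pick pr j ((i, c) # U) =
     (if i = j then pick pr j U
      else if pr i j then (i, c - 1) # pick pr j U else (i, c) # pick pr j U)"

text \<open>Lawler-type backward construction for min-max over the scenario list R.\<close>
fun lawler :: "(nat \<Rightarrow> nat \<Rightarrow> real) \<Rightarrow> (nat \<Rightarrow> nat \<Rightarrow> real) \<Rightarrow> (nat \<Rightarrow> nat \<Rightarrow> real)
    \<Rightarrow> (nat \<Rightarrow> nat \<Rightarrow> bool) \<Rightarrow> nat list \<Rightarrow> nat \<Rightarrow> (nat \<times> nat) list \<Rightarrow> nat list \<Rightarrow> nat list" where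
  "lawler p d w pr R 0 U acc = acc"
| "lawler p d w pr R (Suc f) U acc =
     (if U = [] then acc
      else (case bestj w d (psums p R U) U of
              None \<Rightarrow> acc
            | Some (j, g) \<Rightarrow> lawler p d w pr R f (pick pr j U) (j # acc)))"

fun fval :: "(nat \<Rightarrow> nat \<Rightarrow> real) \<Rightarrow> (nat \<Rightarrow> nat \<Rightarrow> real) \<Rightarrow> (nat \<Rightarrow> nat \<Rightarrow> real)
    \<Rightarrow> nat \<Rightarrow> nat list \<Rightarrow> real \<Rightarrow> real" where
  "fval p d w s [] t = 0"
| "fval p d w s (j # \<sigma>) t =
     (let c = t + p s j in max (w s j * max 0 (c - d s j)) (fval p d w s \<sigma> c))"

fun vmax :: "(nat \<Rightarrow> nat \<Rightarrow> real) \<Rightarrow> (nat \<Rightarrow> nat \<Rightarrow> real) \<Rightarrow> (nat \<Rightarrow> nat \<Rightarrow> real)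
    \<Rightarrow> nat list \<Rightarrow> nat list \<Rightarrow> real" where
  "vmax p d w [] \<sigma> = 0"
| "vmax p d w (s # R) \<sigma> = max (fval p d w s \<sigma> 0) (vmax p d w R \<sigma>)"

definition solve1 :: "(nat \<Rightarrow> nat \<Rightarrow> real) \<Rightarrow> (nat \<Rightarrow> nat \<Rightarrow> real) \<Rightarrow> (nat \<Rightarrow> nat \<Rightarrow> real)
    \<Rightarrow> (nat \<Rightarrow> nat \<Rightarrow> bool) \<Rightarrow> nat \<Rightarrow> nat list \<Rightarrow> nat list \<times> real" where
  "solve1 p d w pr n R =
     (let \<sigma> = lawler p d w pr R n (mkU pr n n) [] in (\<sigma>, vmax p d w R \<sigma>))"

fun minsol :: "(nat \<Rightarrow> nat \<Rightarrow> real) \<Rightarrow> (nat \<Rightarrow> nat \<Rightarrow> real) \<Rightarrow> (nat \<Rightarrow> nat \<Rightarrow> real)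
    \<Rightarrow> (nat \<Rightarrow> nat \<Rightarrow> bool) \<Rightarrow> nat \<Rightarrow> nat list list \<Rightarrow> (nat list \<times> real) option" where
  "minsol p d w pr n [] = None"
| "minsol p d w pr n (R # Rs) =
     (let a = solve1 p d w pr n R in
      case minsol p d w pr n Rs of
        None \<Rightarrow> Some a
      | Some b \<Rightarrow> if snd a \<le> snd b then Some a else Some b)"

text \<open>Min-Quant(k): try every set of K-k+1 scenarios kept (equivalently every set of k-1
  scenarios discarded), solve min-max over the kept ones, return the best schedule.\<close>
definition minquant :: "(nat \<Rightarrow> nat \<Rightarrow> real) \<Rightarrow> (nat \<Rightarrow> nat \<Rightarrow> real) \<Rightarrow> (nat \<Rightarrow> nat \<Rightarrow> real)
    \<Rightarrow> (nat \<Rightarrow> nat \<Rightarrow> bool) \<Rightarrow> nat \<Rightarrow> nat \<Rightarrow> nat \<Rightarrow> nat list" where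
  "minquant p d w pr n K k =
     (case minsol p d w pr n (combs (K - k + 1) K (rng K)) of
        None \<Rightarrow> []
      | Some (\<sigma>, v) \<Rightarrow> \<sigma>)"

text \<open>Step-counting running-time functions, written out by hand exactly as the
  HOL-Library time framework (command time_fun, see HOL-Library.Time_Manual) generates
  them for the functions above: every call of a user-defined function costs 1 plus the
  cost of evaluating its body; constructors and arithmetic/comparison primitives cost 0.
  For a function-valued input parameter f the framework passes a time function T_f
  (or the pair (f, T_f)); accessing an input datum therefore costs T_f of its arguments.\<close>

fun T_consall :: "nat \<Rightarrow> nat list list \<Rightarrow> nat" where
  "T_consall x [] = 1"
| "T_consall x (ys # yss) = T_consall x yss + 1"

fun T_combs :: "nat \<Rightarrow> nat \<Rightarrow> nat list \<Rightarrow> nat" where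
  "T_combs 0 l xs = 1"
| "T_combs (Suc m) l [] = 1"
| "T_combs (Suc m) l (x # xs) =
    (if l < Suc m then 0
     else T_combs m (l - 1) xs + T_consall x (combs m (l - 1) xs) +
          (T_combs (Suc m) (l - 1) xs +
           T_append (consall x (combs m (l - 1) xs)) (combs (Suc m) (l - 1) xs))) + 1"

fun T_rng :: "nat \<Rightarrow> nat" where
  "T_rng 0 = 1"
| "T_rng (Suc i) = T_rng i + 1"

fun T_cnt :: "(nat \<Rightarrow> nat \<Rightarrow> nat) \<Rightarrow> nat \<Rightarrow> nat \<Rightarrow> nat" where
  "T_cnt T_pr j 0 = 1"
| "T_cnt T_pr j (Suc i) = T_pr j i + T_cnt T_pr j i + 1"

fun T_mkU :: "(nat \<Rightarrow> nat \<Rightarrow> nat) \<Rightarrow> nat \<Rightarrow> nat \<Rightarrow> nat" where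
  "T_mkU T_pr n 0 = 1"
| "T_mkU T_pr n (Suc i) = T_cnt T_pr i n + T_mkU T_pr n i + 1"

fun T_sumP :: "(nat \<Rightarrow> nat \<Rightarrow> nat) \<Rightarrow> nat \<Rightarrow> (nat \<times> nat) list \<Rightarrow> nat" where
  "T_sumP T_p s [] = 1"
| "T_sumP T_p s ((j, c) # U) = T_p s j + T_sumP T_p s U + 1"

fun T_psums :: "(nat \<Rightarrow> nat \<Rightarrow> nat) \<Rightarrow> nat list \<Rightarrow> (nat \<times> nat) list \<Rightarrow> nat" where
  "T_psums T_p [] U = 1"
| "T_psums T_p (s # R) U = T_sumP T_p s U + T_psums T_p R U + 1"

fun T_gval :: "(nat \<Rightarrow> nat \<Rightarrow> nat) \<Rightarrow> (nat \<Rightarrow> nat \<Rightarrow> nat) \<Rightarrow> nat \<Rightarrow> (nat \<times> real) list \<Rightarrow> nat" where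
  "T_gval T_w T_d j [] = 1"
| "T_gval T_w T_d j ((s, P) # PS) = T_w s j + T_d s j + T_gval T_w T_d j PS + 1"

fun T_bestj :: "(nat \<Rightarrow> nat \<Rightarrow> nat) \<Rightarrow> (nat \<Rightarrow> nat \<Rightarrow> nat) \<Rightarrow> (nat \<times> real) list
    \<Rightarrow> (nat \<times> nat) list \<Rightarrow> nat" where
  "T_bestj T_w T_d PS [] = 1"
| "T_bestj T_w T_d PS ((j, c) # U) =
    T_bestj T_w T_d PS U + (if c = 0 then T_gval T_w T_d j PS else 0) + 1"

fun T_pick :: "(nat \<Rightarrow> nat \<Rightarrow> nat) \<Rightarrow> nat \<Rightarrow> (nat \<times> nat) list \<Rightarrow> nat" where
  "T_pick T_pr j [] = 1"
| "T_pick T_pr j ((i, c) # U) =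
    (if i = j then T_pick T_pr j U else T_pr i j + T_pick T_pr j U) + 1"

fun T_lawler :: "(nat \<Rightarrow> nat \<Rightarrow> real) \<times> (nat \<Rightarrow> nat \<Rightarrow> nat)
    \<Rightarrow> (nat \<Rightarrow> nat \<Rightarrow> real) \<times> (nat \<Rightarrow> nat \<Rightarrow> nat)
    \<Rightarrow> (nat \<Rightarrow> nat \<Rightarrow> real) \<times> (nat \<Rightarrow> nat \<Rightarrow> nat)
    \<Rightarrow> (nat \<Rightarrow> nat \<Rightarrow> bool) \<times> (nat \<Rightarrow> nat \<Rightarrow> nat)
    \<Rightarrow> nat list \<Rightarrow> nat \<Rightarrow> (nat \<times> nat) list \<Rightarrow> nat list \<Rightarrow> nat" where
  "T_lawler p d w pr R 0 U acc = 1"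
| "T_lawler p d w pr R (Suc f) U acc =
    (if U = [] then 0
     else T_psums (snd p) R U +
          T_bestj (snd w) (snd d) (psums (fst p) R U) U +
          (case bestj (fst w) (fst d) (psums (fst p) R U) U of
             None \<Rightarrow> 0
           | Some (j, g) \<Rightarrow>
               T_pick (snd pr) j U + T_lawler p d w pr R f (pick (fst pr) j U) (j # acc))) + 1"

fun T_fval :: "(nat \<Rightarrow> nat \<Rightarrow> real) \<times> (nat \<Rightarrow> nat \<Rightarrow> nat)
    \<Rightarrow> (nat \<Rightarrow> nat \<Rightarrow> real) \<times> (nat \<Rightarrow> nat \<Rightarrow> nat)
    \<Rightarrow> (nat \<Rightarrow> nat \<Rightarrow> real) \<times> (nat \<Rightarrow> nat \<Rightarrow> nat)
    \<Rightarrow> nat \<Rightarrow> nat list \<Rightarrow> real \<Rightarrow> nat" where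
  "T_fval p d w s [] t = 1"
| "T_fval p d w s (j # \<sigma>) t =
    snd p s j + (let c = t + fst p s j in snd w s j + snd d s j + T_fval p d w s \<sigma> c) + 1"

fun T_vmax :: "(nat \<Rightarrow> nat \<Rightarrow> real) \<times> (nat \<Rightarrow> nat \<Rightarrow> nat)
    \<Rightarrow> (nat \<Rightarrow> nat \<Rightarrow> real) \<times> (nat \<Rightarrow> nat \<Rightarrow> nat)
    \<Rightarrow> (nat \<Rightarrow> nat \<Rightarrow> real) \<times> (nat \<Rightarrow> nat \<Rightarrow> nat)
    \<Rightarrow> nat list \<Rightarrow> nat list \<Rightarrow> nat" where
  "T_vmax p d w [] \<sigma> = 1"
| "T_vmax p d w (s # R) \<sigma> = T_fval p d w s \<sigma> 0 + T_vmax p d w R \<sigma> + 1"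

definition T_solve1 :: "(nat \<Rightarrow> nat \<Rightarrow> real) \<times> (nat \<Rightarrow> nat \<Rightarrow> nat)
    \<Rightarrow> (nat \<Rightarrow> nat \<Rightarrow> real) \<times> (nat \<Rightarrow> nat \<Rightarrow> nat)
    \<Rightarrow> (nat \<Rightarrow> nat \<Rightarrow> real) \<times> (nat \<Rightarrow> nat \<Rightarrow> nat)
    \<Rightarrow> (nat \<Rightarrow> nat \<Rightarrow> bool) \<times> (nat \<Rightarrow> nat \<Rightarrow> nat)
    \<Rightarrow> nat \<Rightarrow> nat list \<Rightarrow> nat" where
  "T_solve1 p d w pr n R =
    T_mkU (snd pr) n n + T_lawler p d w pr R n (mkU (fst pr) n n) [] +
    Let (lawler (fst p) (fst d) (fst w) (fst pr) R n (mkU (fst pr) n n) []) (T_vmax p d w R)"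

fun T_minsol :: "(nat \<Rightarrow> nat \<Rightarrow> real) \<times> (nat \<Rightarrow> nat \<Rightarrow> nat)
    \<Rightarrow> (nat \<Rightarrow> nat \<Rightarrow> real) \<times> (nat \<Rightarrow> nat \<Rightarrow> nat)
    \<Rightarrow> (nat \<Rightarrow> nat \<Rightarrow> real) \<times> (nat \<Rightarrow> nat \<Rightarrow> nat)
    \<Rightarrow> (nat \<Rightarrow> nat \<Rightarrow> bool) \<times> (nat \<Rightarrow> nat \<Rightarrow> nat)
    \<Rightarrow> nat \<Rightarrow> nat list list \<Rightarrow> nat" where
  "T_minsol p d w pr n [] = 1"
| "T_minsol p d w pr n (R # Rs) =
    T_solve1 p d w pr n R +
    (let a = solve1 (fst p) (fst d) (fst w) (fst pr) n R
     in T_minsol p d w pr n Rs +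
        (case minsol (fst p) (fst d) (fst w) (fst pr) n Rs of
           None \<Rightarrow> 0
         | Some b \<Rightarrow> T_snd a + T_snd b)) + 1"

definition T_minquant :: "(nat \<Rightarrow> nat \<Rightarrow> real) \<times> (nat \<Rightarrow> nat \<Rightarrow> nat)
    \<Rightarrow> (nat \<Rightarrow> nat \<Rightarrow> real) \<times> (nat \<Rightarrow> nat \<Rightarrow> nat)
    \<Rightarrow> (nat \<Rightarrow> nat \<Rightarrow> real) \<times> (nat \<Rightarrow> nat \<Rightarrow> nat)
    \<Rightarrow> (nat \<Rightarrow> nat \<Rightarrow> bool) \<times> (nat \<Rightarrow> nat \<Rightarrow> nat)
    \<Rightarrow> nat \<Rightarrow> nat \<Rightarrow> nat \<Rightarrow> nat" where
  "T_minquant p d w pr n K k =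
    T_rng K + T_combs (K - k + 1) K (rng K) +
    T_minsol p d w pr n (combs (K - k + 1) K (rng K))"

end

theory Submission
  imports Defs
begin

text \<open>
  With m = K - k + 1 the proof rests on the quantile identity
    k-th largest of f(\<pi>,S_1..S_K) = min over m-element scenario sets A of max_{s\<in>A} f(\<pi>,s):
  every m-set contains a scenario whose cost is at least the k-th largest value, and the
  m smallest costs form an m-set whose maximum is that value.  Hence it suffices to solve
  the min-max problem for every m-set of scenarios and keep the best schedule, which is
  what the algorithm does; min-max of max w_j T_j is solved by Lawler's backward rule
  (schedule last a sink of the remaining precedence order with the least cost).
  There are K choose m = K choose (k-1) such sets and each run costs O(m n^2), giving
  the bound O((K choose (k-1)) (K-k+1) n^2), which is at most O(K^k n^2).
\<close>

section \<open>Enumerating the m-element subsets\<close>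

lemma consall_map: "consall x L = map ((#) x) L"
  by (induction L) auto

lemma length_combs: "length xs = l \<Longrightarrow> length (combs m l xs) = l choose m"
proof (induction xs arbitrary: m l)
  case Nil then show ?case by (cases m) auto
next
  case (Cons x xs)
  then show ?case by (cases m) (auto simp: consall_map binomial_eq_0)
qed

lemma combs_sound:
  "length xs = l \<Longrightarrow> distinct xs \<Longrightarrow> ys \<in> set (combs m l xs) \<Longrightarrow>
   distinct ys \<and> set ys \<subseteq> set xs \<and> length ys = m"
proof (induction xs arbitrary: m l ys)
  case Nil then show ?case by (cases m) auto
next
  case (Cons x xs)
  show ?case
  proof (cases m)
    case 0 then show ?thesis using Cons.prems by simp
  next
    case (Suc m')
    have "(\<exists>zs. ys = x # zs \<and> zs \<in> set (combs m' (length xs) xs)) \<or>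
          ys \<in> set (combs (Suc m') (length xs) xs)"
      using Cons.prems Suc by (auto simp: consall_map split: if_splits)
    then show ?thesis
    proof
      assume "\<exists>zs. ys = x # zs \<and> zs \<in> set (combs m' (length xs) xs)"
      then obtain zs where zs: "ys = x # zs" "zs \<in> set (combs m' (length xs) xs)" by blast
      then show ?thesis using Cons.IH[OF refl _ zs(2)] Cons.prems(2) Suc by auto
    next
      assume "ys \<in> set (combs (Suc m') (length xs) xs)"
      then show ?thesis using Cons.IH[OF refl] Cons.prems(2) Suc by auto
    qed
  qed
qed

lemma combs_complete:
  "length xs = l \<Longrightarrow> distinct xs \<Longrightarrow> A \<subseteq> set xs \<Longrightarrow> card A = m \<Longrightarrow>
   filter (\<lambda>x. x \<in> A) xs \<in> set (combs m l xs)"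
proof (induction xs arbitrary: m l A)
  case Nil then show ?case by (cases m) auto
next
  case (Cons x xs)
  have finA: "finite A" using Cons.prems(3) finite_subset by blast
  show ?case
  proof (cases m)
    case 0
    then show ?thesis using Cons.prems finA by simp
  next
    case (Suc m')
    have l: "l = Suc (length xs)" using Cons.prems(1) by simp
    have "card A \<le> card (set (x # xs))" using Cons.prems(3) by (intro card_mono) auto
    then have fits: "\<not> l < Suc m'" using Suc Cons.prems by (simp add: distinct_card)
    have xn: "x \<notin> set xs" using Cons.prems(2) by simp
    show ?thesis
    proof (cases "x \<in> A")
      case True
      have "filter (\<lambda>y. y \<in> A) xs = filter (\<lambda>y. y \<in> A - {x}) xs"
        using xn by (intro filter_cong) auto
      moreover have "filter (\<lambda>y. y \<in> A - {x}) xs \<in> set (combs m' (length xs) xs)"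
        using Cons.IH[of "length xs" "A - {x}" m'] Cons.prems True Suc finA by auto
      ultimately show ?thesis using True fits l Suc by (simp add: consall_map)
    next
      case False
      have "filter (\<lambda>y. y \<in> A) xs \<in> set (combs (Suc m') (length xs) xs)"
        using Cons.IH[of "length xs" A "Suc m'"] Cons.prems False Suc by auto
      then show ?thesis using False fits l Suc by (simp add: consall_map)
    qed
  qed
qed

lemma rng_eq: "rng K = rev [0..<K]"
  by (induction K) auto

section \<open>Evaluating a schedule under one scenario\<close>

text \<open>fval s \<sigma> t is the maximal weighted tardiness of the jobs of \<sigma> processed from time t on.\<close>
lemma fval_nonneg: "0 \<le> fval p d w s \<sigma> t"
  by (induction \<sigma> arbitrary: t) (auto simp: Let_def max.coboundedI2)

lemma fval_append:
  "fval p d w s (xs @ ys) t =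
     max (fval p d w s xs t) (fval p d w s ys (t + sum_list (map (p s) xs)))"
  by (induction xs arbitrary: t)
    (simp_all add: Let_def max.assoc add.assoc fval_nonneg max_absorb2)

lemma fval_mono_start:
  "(\<forall>x\<in>set \<sigma>. 0 \<le> w s x) \<Longrightarrow> t \<le> t' \<Longrightarrow> fval p d w s \<sigma> t \<le> fval p d w s \<sigma> t'"
proof (induction \<sigma> arbitrary: t t')
  case Nil then show ?case by simp
next
  case (Cons x \<sigma>)
  have "w s x * max 0 (t + p s x - d s x) \<le> w s x * max 0 (t' + p s x - d s x)"
    using Cons.prems by (intro mult_left_mono) auto
  moreover have "fval p d w s \<sigma> (t + p s x) \<le> fval p d w s \<sigma> (t' + p s x)"
    using Cons by auto
  ultimately show ?case unfolding fval.simps Let_def by (rule max.mono)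
qed

lemma fval_remove1:
  "(\<forall>x\<in>set \<sigma>. 0 \<le> w s x \<and> 0 \<le> p s x) \<Longrightarrow>
   fval p d w s (remove1 j \<sigma>) t \<le> fval p d w s \<sigma> t"
proof (induction \<sigma> arbitrary: t)
  case Nil then show ?case by simp
next
  case (Cons x \<sigma>)
  show ?case
  proof (cases "x = j")
    case True
    have "fval p d w s \<sigma> t \<le> fval p d w s \<sigma> (t + p s x)"
      using Cons.prems by (intro fval_mono_start) auto
    then show ?thesis using True by (simp add: Let_def)
  next
    case False
    have "fval p d w s (remove1 j \<sigma>) (t + p s x) \<le> fval p d w s \<sigma> (t + p s x)"
      using Cons by simp
    then show ?thesis using False by (simp add: Let_def max.mono)
  qed
qed

lemma fval_last_job:
  assumes "\<tau> \<noteq> []"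
  shows "w s (last \<tau>) * max 0 (t + sum_list (map (p s) \<tau>) - d s (last \<tau>))
           \<le> fval p d w s (\<tau> @ acc) t"
proof -
  obtain \<tau>0 where \<tau>: "\<tau> = \<tau>0 @ [last \<tau>]" using assms by (metis append_butlast_last_id)
  have "fval p d w s (\<tau>0 @ [last \<tau>] @ acc) t
      = max (fval p d w s \<tau>0 t) (fval p d w s ([last \<tau>] @ acc) (t + sum_list (map (p s) \<tau>0)))"
    by (rule fval_append)
  then show ?thesis by (subst (1 2 4) \<tau>) (simp add: Let_def add.assoc)
qed

lemma fval_move_to_end:
  assumes "j \<in> set \<tau>" "\<forall>x\<in>set \<tau>. 0 \<le> w s x \<and> 0 \<le> p s x"
  shows "fval p d w s (remove1 j \<tau> @ j # acc) t
     \<le> max (fval p d w s (\<tau> @ acc) t) (w s j * max 0 (t + sum_list (map (p s) \<tau>) - d s j))"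
proof -
  have total: "sum_list (map (p s) (remove1 j \<tau>)) + p s j = sum_list (map (p s) \<tau>)"
    using sum_list_map_remove1[OF assms(1), of "p s"] by simp
  have "fval p d w s (remove1 j \<tau> @ j # acc) t =
     max (fval p d w s (remove1 j \<tau>) t)
         (max (w s j * max 0 (t + sum_list (map (p s) \<tau>) - d s j))
              (fval p d w s acc (t + sum_list (map (p s) \<tau>))))"
    using total by (simp add: fval_append Let_def add.assoc)
  moreover have "fval p d w s (\<tau> @ acc) t =
     max (fval p d w s \<tau> t) (fval p d w s acc (t + sum_list (map (p s) \<tau>)))"
    by (rule fval_append)
  moreover have "fval p d w s (remove1 j \<tau>) t \<le> fval p d w s \<tau> t"
    using assms(2) by (rule fval_remove1)
  ultimately show ?thesis by linarith
qed

lemma fval_ge_job: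
  "j \<in> set \<sigma> \<Longrightarrow>
   w s j * max 0 (t + sum_list (map (p s) (takeWhile (\<lambda>i. i \<noteq> j) \<sigma> @ [j])) - d s j)
     \<le> fval p d w s \<sigma> t"
proof (induction \<sigma> arbitrary: t)
  case Nil then show ?case by simp
next
  case (Cons x \<sigma>)
  then show ?case
    by (cases "j = x") (auto simp: Let_def add.assoc max.coboundedI2 dest: Cons.IH[of "t + p s x"])
qed

lemma fval_le_bound:
  "distinct \<sigma> \<Longrightarrow> 0 \<le> M \<Longrightarrow>
   (\<forall>j\<in>set \<sigma>. w s j * max 0 (t + sum_list (map (p s) (takeWhile (\<lambda>i. i \<noteq> j) \<sigma> @ [j])) - d s j) \<le> M)
   \<Longrightarrow> fval p d w s \<sigma> t \<le> M"
proof (induction \<sigma> arbitrary: t)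
  case Nil then show ?case by simp
next
  case (Cons x \<sigma>)
  have "\<forall>j\<in>set \<sigma>. w s j * max 0 (t + p s x + sum_list (map (p s) (takeWhile (\<lambda>i. i \<noteq> j) \<sigma> @ [j])) - d s j) \<le> M"
  proof
    fix j assume j: "j \<in> set \<sigma>"
    then have "j \<noteq> x" "x \<noteq> j" using Cons.prems(1) by auto
    moreover have "w s j * max 0 (t + sum_list (map (p s) (takeWhile (\<lambda>i. i \<noteq> j) (x # \<sigma>) @ [j])) - d s j) \<le> M"
      using Cons.prems(3) j by simp
    ultimately show "w s j * max 0 (t + p s x + sum_list (map (p s) (takeWhile (\<lambda>i. i \<noteq> j) \<sigma> @ [j])) - d s j) \<le> M"
      by (simp add: add.assoc)
  qed
  then have "fval p d w s \<sigma> (t + p s x) \<le> M" using Cons by simp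
  then show ?case using Cons.prems(3) by (simp add: Let_def)
qed

lemma fval_eq_sched_cost:
  assumes "\<sigma> \<in> schedules n prec" "1 \<le> n" "\<forall>j<n. 0 \<le> w s j"
  shows "fval p d w s \<sigma> 0 = sched_cost n p d w \<sigma> s"
proof -
  let ?h = "\<lambda>j. w s j * max 0 (completion p \<sigma> s j - d s j)"
  let ?F = "?h ` {0..<n}"
  have fin: "finite ?F" and ne: "?F \<noteq> {}" using assms by auto
  have st: "set \<sigma> = {0..<n}" "distinct \<sigma>" using assms(1) by (auto simp: schedules_def)
  have "Max ?F \<le> fval p d w s \<sigma> 0"
  proof (subst Max_le_iff[OF fin ne], intro ballI)
    fix x assume "x \<in> ?F"
    then obtain j where "j < n" "x = ?h j" by auto
    then show "x \<le> fval p d w s \<sigma> 0"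
      using fval_ge_job[of j \<sigma> w s 0 p d] st by (simp add: completion_def)
  qed
  moreover have "fval p d w s \<sigma> 0 \<le> Max ?F"
  proof (rule fval_le_bound[OF st(2)])
    have "0 \<le> ?h 0" using assms by simp
    also have "?h 0 \<le> Max ?F" by (rule Max_ge[OF fin]) (use assms(2) in auto)
    finally show "0 \<le> Max ?F" .
    show "\<forall>j\<in>set \<sigma>. w s j * max 0 (0 + sum_list (map (p s) (takeWhile (\<lambda>i. i \<noteq> j) \<sigma> @ [j])) - d s j) \<le> Max ?F"
      using Max_ge[OF fin] st by (simp add: completion_def)
  qed
  ultimately show ?thesis by (simp add: sched_cost_def)
qed

text \<open>vmax R \<sigma> is the min-max objective max_{s\<in>R} f(\<sigma>,S_s) (and 0 for R = []).\<close>
lemma vmax_ge: "s \<in> set R \<Longrightarrow> fval p d w s \<sigma> 0 \<le> vmax p d w R \<sigma>"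
  by (induction R) auto

lemma vmax_le: "0 \<le> M \<Longrightarrow> (\<forall>s\<in>set R. fval p d w s \<sigma> 0 \<le> M) \<Longrightarrow> vmax p d w R \<sigma> \<le> M"
  by (induction R) auto

lemma vmax_nonneg: "0 \<le> vmax p d w R \<sigma>"
  by (induction R) (auto simp: max.coboundedI2)


section \<open>Lawler's algorithm for the min-max problem over a scenario list\<close>

definition respects_prec :: "(nat \<Rightarrow> nat \<Rightarrow> bool) \<Rightarrow> nat list \<Rightarrow> bool" where
  "respects_prec prec \<tau> \<longleftrightarrow> sorted_wrt (\<lambda>a b. \<not> prec b a) \<tau>"

lemma schedules_iff:
  "\<tau> \<in> schedules n prec \<longleftrightarrow> distinct \<tau> \<and> set \<tau> = {0..<n} \<and> respects_prec prec \<tau>"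
  by (simp add: schedules_def respects_prec_def sorted_wrt_iff_nth_less) blast

lemma respects_prec_remove1: "respects_prec prec \<tau> \<Longrightarrow> distinct \<tau> \<Longrightarrow> respects_prec prec (remove1 j \<tau>)"
  by (simp add: respects_prec_def distinct_remove1_removeAll removeAll_filter_not_eq sorted_wrt_filter)

lemma last_is_sink:
  assumes "respects_prec prec \<tau>" "\<tau> \<noteq> []" "\<forall>x\<in>set \<tau>. \<not> prec x x"
  shows "\<forall>x\<in>set \<tau>. \<not> prec (last \<tau>) x"
proof -
  obtain \<tau>0 l where \<tau>: "\<tau> = \<tau>0 @ [l]" using assms(2) by (metis rev_exhaust)
  then have "\<forall>x\<in>set \<tau>0. \<not> prec l x"
    using assms(1) unfolding respects_prec_def by (simp add: sorted_wrt_append)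
  then show ?thesis using assms(3) \<tau> by auto
qed

text \<open>A nonempty finite set with an irreflexive transitive relation has a sink
  (choose an element with the most predecessors).\<close>
lemma exists_sink:
  assumes fin: "finite S" and ne: "S \<noteq> {}" and irr: "\<forall>i\<in>S. \<not> prec i i"
    and tr: "\<forall>i\<in>S. \<forall>j\<in>S. \<forall>l\<in>S. prec i j \<and> prec j l \<longrightarrow> prec i l"
  shows "\<exists>x\<in>S. \<forall>y\<in>S. \<not> prec x y"
proof -
  let ?preds = "\<lambda>x. card {i\<in>S. prec i x}"
  have "Max (?preds ` S) \<in> ?preds ` S" using fin ne by (intro Max_in) auto
  then obtain x where x: "x \<in> S" "?preds x = Max (?preds ` S)" by auto
  have "\<not> prec x y" if y: "y \<in> S" for y
  proof
    assume xy: "prec x y"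
    have "prec i y" if "i \<in> S" "prec i x" for i
      using tr that x(1) y xy by blast
    then have "insert x {i\<in>S. prec i x} \<subseteq> {i\<in>S. prec i y}"
      using x(1) xy by blast
    then have "card (insert x {i\<in>S. prec i x}) \<le> ?preds y"
      using fin by (intro card_mono) auto
    moreover have "x \<notin> {i\<in>S. prec i x}" using irr x(1) by blast
    moreover have "?preds y \<le> ?preds x" using x(2) fin y by simp
    ultimately show False using fin by simp
  qed
  then show ?thesis using x(1) by blast
qed

definition succ_counts :: "(nat \<Rightarrow> nat \<Rightarrow> bool) \<Rightarrow> (nat \<times> nat) list \<Rightarrow> bool" where
  "succ_counts prec U \<longleftrightarrow> distinct (map fst U) \<and>
     (\<forall>(j, c)\<in>set U. c = card {i\<in>set (map fst U). prec j i})"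

lemma succ_counts_zero:
  "succ_counts prec U \<Longrightarrow> (j, c) \<in> set U \<Longrightarrow> c = 0 \<longleftrightarrow> (\<forall>i\<in>set (map fst U). \<not> prec j i)"
  unfolding succ_counts_def by fastforce

lemma cnt_eq: "cnt pr j m = card {i. i < m \<and> pr j i}"
proof (induction m)
  case 0 then show ?case by simp
next
  case (Suc m)
  have "{i. i < Suc m \<and> pr j i} =
        (if pr j m then insert m {i. i < m \<and> pr j i} else {i. i < m \<and> pr j i})"
    by (auto simp: less_Suc_eq)
  then show ?case using Suc by simp
qed

lemma mkU_fst: "map fst (mkU pr n m) = rev [0..<m]"
  by (induction m) auto

lemma length_mkU: "length (mkU pr n m) = m"
  by (induction m) auto

lemma succ_counts_mkU: "succ_counts prec (mkU prec n n)"
proof -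
  have "c = cnt prec j n" if "(j, c) \<in> set (mkU prec n m)" for j c m
    using that by (induction m) auto
  then show ?thesis unfolding succ_counts_def by (auto simp: mkU_fst cnt_eq)
qed

lemma pick_fst: "map fst (pick q j U) = filter (\<lambda>i. i \<noteq> j) (map fst U)"
  by (induction q j U rule: pick.induct) auto

lemma length_pick: "length (pick q j U) \<le> length U"
  by (induction q j U rule: pick.induct) auto

lemma pick_mem: "(i, c) \<in> set (pick q j U) \<Longrightarrow>
  \<exists>c0. (i, c0) \<in> set U \<and> i \<noteq> j \<and> c = (if q i j then c0 - 1 else c0)"
  by (induction q j U rule: pick.induct) (auto split: if_splits)

lemma succ_counts_pick:
  assumes cnt: "succ_counts prec U" and jS: "j \<in> set (map fst U)"
  shows "succ_counts prec (pick prec j U)"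
proof -
  let ?S = "set (map fst U)"
  have S': "set (map fst (pick prec j U)) = ?S - {j}" by (auto simp: pick_fst)
  have "c = card {x\<in>?S - {j}. prec i x}" if ic: "(i, c) \<in> set (pick prec j U)" for i c
  proof -
    obtain c0 where c0: "(i, c0) \<in> set U" "c = (if prec i j then c0 - 1 else c0)"
      using pick_mem[OF ic] by blast
    have "c0 = card {x\<in>?S. prec i x}" using cnt c0(1) unfolding succ_counts_def by auto
    moreover have "{x\<in>?S - {j}. prec i x} = {x\<in>?S. prec i x} - {j}" by auto
    ultimately show ?thesis using c0(2) jS by (auto simp: card_Diff_singleton)
  qed
  then show ?thesis using cnt S' unfolding succ_counts_def by (auto simp: pick_fst)
qed

lemma bestj_None: "bestj w d PS U = None \<longleftrightarrow> (\<forall>(j, c)\<in>set U. c \<noteq> 0)"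
  by (induction w d PS U rule: bestj.induct) (auto simp: Let_def split: option.splits)

lemma bestj_Some: "bestj w d PS U = Some (j, g) \<Longrightarrow>
  (j, 0) \<in> set U \<and> g = gval w d j PS \<and> (\<forall>(i, c)\<in>set U. c = 0 \<longrightarrow> g \<le> gval w d i PS)"
proof (induction U arbitrary: j g)
  case Nil then show ?case by simp
next
  case (Cons a U)
  obtain i c where a: "a = (i, c)" by (cases a)
  show ?case
  proof (cases "c = 0")
    case False
    then show ?thesis using Cons a by (auto simp: Let_def)
  next
    case True
    show ?thesis
    proof (cases "bestj w d PS U")
      case None
      then have "\<forall>(j, c)\<in>set U. c \<noteq> 0" using bestj_None by blast
      then show ?thesis using Cons.prems a True None by (auto simp: Let_def)
    next
      case (Some b)
      obtain j' g' where b: "b = (j', g')" by (cases b)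
      have IH: "(j', 0) \<in> set U \<and> g' = gval w d j' PS \<and> (\<forall>(i, c)\<in>set U. c = 0 \<longrightarrow> g' \<le> gval w d i PS)"
        using Cons.IH[OF Some[unfolded b]] .
      show ?thesis
        using Cons.prems a True Some b IH
        by (cases "gval w d i PS \<le> g'") (fastforce simp: Let_def)+
    qed
  qed
qed

text \<open>As long as jobs remain, bestj finds one (a sink has count 0).\<close>
lemma bestj_exists:
  assumes cnt: "succ_counts prec U" and ne: "U \<noteq> []" and S: "set (map fst U) \<subseteq> {0..<n}"
    and irr: "\<forall>i<n. \<not> prec i i" and tr: "\<forall>i<n. \<forall>j<n. \<forall>l<n. prec i j \<and> prec j l \<longrightarrow> prec i l"
  shows "bestj w d PS U \<noteq> None"
proof -
  let ?S = "set (map fst U)"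
  have "\<forall>i\<in>?S. \<not> prec i i" using irr S by auto
  moreover have "\<forall>i\<in>?S. \<forall>j\<in>?S. \<forall>l\<in>?S. prec i j \<and> prec j l \<longrightarrow> prec i l"
    using tr S by (meson atLeastLessThan_iff subsetD)
  moreover have "?S \<noteq> {}" using ne by simp
  ultimately obtain x where x: "x \<in> ?S" "\<forall>y\<in>?S. \<not> prec x y"
    using exists_sink[of ?S prec] by blast
  then obtain c where c: "(x, c) \<in> set U" by auto
  then have "c = 0" using x(2) succ_counts_zero[OF cnt c] by simp
  then show ?thesis using c bestj_None by fastforce
qed

lemma bestj_pick:
  assumes cnt: "succ_counts prec U" and bj: "bestj w d PS U = Some (j, g)"
  shows "j \<in> set (map fst U)" and "\<forall>i\<in>set (map fst U). \<not> prec j i"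
    and "succ_counts prec (pick prec j U)"
    and "set (map fst (pick prec j U)) = set (map fst U) - {j}"
    and "length (pick prec j U) < length U"
proof -
  have j0: "(j, 0) \<in> set U" using bestj_Some[OF bj] by simp
  then show jS: "j \<in> set (map fst U)" by force
  show "\<forall>i\<in>set (map fst U). \<not> prec j i" using succ_counts_zero[OF cnt j0] by simp
  show "succ_counts prec (pick prec j U)" using succ_counts_pick[OF cnt jS] .
  show "set (map fst (pick prec j U)) = set (map fst U) - {j}" by (auto simp: pick_fst)
  show "length (pick prec j U) < length U"
    using jS length_filter_less[of j "map fst U" "\<lambda>i. i \<noteq> j"] pick_fst[of prec j U]
    by (metis length_map)
qed

text \<open>psums pairs every scenario of R with the total processing time of the remaining
  jobs, which is the completion time of the job scheduled last; gval is the largest cost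
  of a job over the scenarios of R when it completes at that time.\<close>
lemma psums_eq: "psums p R U = map (\<lambda>s. (s, sumP p s U)) R"
  by (induction R) auto

lemma sumP_eq: "sumP p s U = sum_list (map (p s) (map fst U))"
  by (induction p s U rule: sumP.induct) auto

lemma gval_ge: "s \<in> set R \<Longrightarrow> w s j * max 0 (F s - d s j) \<le> gval w d j (map (\<lambda>s. (s, F s)) R)"
  by (induction R) auto

lemma gval_le: "0 \<le> M \<Longrightarrow> (\<forall>s\<in>set R. w s j * max 0 (F s - d s j) \<le> M) \<Longrightarrow>
  gval w d j (map (\<lambda>s. (s, F s)) R) \<le> M"
  by (induction R) auto

text \<open>Lawler's exchange argument: for any respecting order \<tau> of the remaining jobs, moving
  the job j chosen by bestj to the end of \<tau> does not increase the min-max cost.  Indeed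
  the last job l of \<tau> is a sink, so the cost of j at the end is at most that of l at the
  end, which is already part of the cost of \<tau>.\<close>
lemma lawler_exchange:
  assumes cnt: "succ_counts prec U"
    and irr: "\<forall>i\<in>set (map fst U). \<not> prec i i"
    and nn: "\<forall>s\<in>set R. \<forall>x\<in>set (map fst U). 0 \<le> p s x \<and> 0 \<le> w s x"
    and bj: "bestj w d (psums p R U) U = Some (j, g)"
    and \<tau>: "distinct \<tau>" "set \<tau> = set (map fst U)" "respects_prec prec \<tau>"
  shows "vmax p d w R (remove1 j \<tau> @ j # acc) \<le> vmax p d w R (\<tau> @ acc)"
proof -
  let ?M = "vmax p d w R (\<tau> @ acc)"
  have total: "sum_list (map (p s) \<tau>) = sumP p s U" for s
  proof -
    have "distinct (map fst U)" using cnt by (simp add: succ_counts_def)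
    then have "sumP p s U = sum (p s) (set (map fst U))"
      by (simp only: sumP_eq sum_list_distinct_conv_sum_set)
    then show ?thesis using \<tau> by (simp add: sum_list_distinct_conv_sum_set)
  qed
  have j: "(j, 0) \<in> set U" "g = gval w d j (psums p R U)"
    and g_min: "\<forall>(i, c)\<in>set U. c = 0 \<longrightarrow> g \<le> gval w d i (psums p R U)"
    using bestj_Some[OF bj] by auto
  have jS: "j \<in> set \<tau>" using \<tau>(2) j(1) by force
  then have ne: "\<tau> \<noteq> []" by auto
  have "last \<tau> \<in> set (map fst U)" using \<tau>(2) ne by auto
  then obtain c where c: "(last \<tau>, c) \<in> set U" by auto
  have "\<forall>x\<in>set (map fst U). \<not> prec (last \<tau>) x"
    using last_is_sink[OF \<tau>(3) ne] irr \<tau>(2) by auto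
  then have "c = 0" using succ_counts_zero[OF cnt c] by simp
  then have g_last: "g \<le> gval w d (last \<tau>) (psums p R U)" using g_min c by auto
  have last_M: "gval w d (last \<tau>) (psums p R U) \<le> ?M"
    unfolding psums_eq
  proof (rule gval_le[OF vmax_nonneg], intro ballI)
    fix s assume s: "s \<in> set R"
    have "w s (last \<tau>) * max 0 (sumP p s U - d s (last \<tau>)) \<le> fval p d w s (\<tau> @ acc) 0"
      using fval_last_job[OF ne, of w s 0 p d acc] total by simp
    then show "w s (last \<tau>) * max 0 (sumP p s U - d s (last \<tau>)) \<le> ?M"
      using vmax_ge[OF s] by (rule order.trans)
  qed
  show ?thesis
  proof (rule vmax_le[OF vmax_nonneg], intro ballI)
    fix s assume s: "s \<in> set R"
    have "fval p d w s (remove1 j \<tau> @ j # acc) 0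
        \<le> max (fval p d w s (\<tau> @ acc) 0) (w s j * max 0 (0 + sum_list (map (p s) \<tau>) - d s j))"
      using jS nn s \<tau>(2) by (intro fval_move_to_end) auto
    moreover have "fval p d w s (\<tau> @ acc) 0 \<le> ?M" by (rule vmax_ge[OF s])
    moreover have "w s j * max 0 (sumP p s U - d s j) \<le> g"
      using gval_ge[OF s, where F = "\<lambda>s. sumP p s U" and j = j] j(2) by (simp add: psums_eq)
    ultimately show "fval p d w s (remove1 j \<tau> @ j # acc) 0 \<le> ?M"
      using total g_last last_M by fastforce
  qed
qed

lemma lawler_correct:
  assumes irr: "\<forall>i<n. \<not> prec i i"
    and tr: "\<forall>i<n. \<forall>j<n. \<forall>l<n. prec i j \<and> prec j l \<longrightarrow> prec i l"
    and nn: "\<forall>s\<in>set R. \<forall>j<n. 0 \<le> p s j \<and> 0 \<le> w s j"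
  shows "succ_counts prec U \<Longrightarrow> set (map fst U) \<subseteq> {0..<n} \<Longrightarrow> length U \<le> f \<Longrightarrow>
    \<exists>ys. lawler p d w prec R f U acc = ys @ acc \<and> distinct ys \<and> set ys = set (map fst U) \<and>
      (respects_prec prec acc \<and> (\<forall>x\<in>set (map fst U). \<forall>a\<in>set acc. \<not> prec a x)
         \<longrightarrow> respects_prec prec (ys @ acc)) \<and>
      (\<forall>\<tau>. distinct \<tau> \<and> set \<tau> = set (map fst U) \<and> respects_prec prec \<tau> \<longrightarrow>
         vmax p d w R (ys @ acc) \<le> vmax p d w R (\<tau> @ acc))"
proof (induction f arbitrary: U acc)
  case 0
  then show ?case by simp
next
  case (Suc f)
  let ?S = "set (map fst U)"
  show ?case
  proof (cases "U = []")
    case True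
    then show ?thesis by simp
  next
    case False
    obtain j g where bj: "bestj w d (psums p R U) U = Some (j, g)"
      using bestj_exists[OF Suc.prems(1) False Suc.prems(2) irr tr, of w d "psums p R U"] by auto
    note step = bestj_pick[OF Suc.prems(1) bj]
    note jS = step(1) and j_sink = step(2) and cnt' = step(3) and S' = step(4)
    let ?U' = "pick prec j U"
    have len': "length ?U' \<le> f" using step(5) Suc.prems(3) by simp
    have sub': "set (map fst ?U') \<subseteq> {0..<n}" using S' Suc.prems(2) by auto
    obtain ys where ys: "lawler p d w prec R f ?U' (j # acc) = ys @ j # acc"
      "distinct ys" "set ys = ?S - {j}"
      "respects_prec prec (j # acc) \<and> (\<forall>x\<in>?S - {j}. \<forall>a\<in>set (j # acc). \<not> prec a x)
         \<longrightarrow> respects_prec prec (ys @ j # acc)"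
      "\<forall>\<tau>. distinct \<tau> \<and> set \<tau> = ?S - {j} \<and> respects_prec prec \<tau> \<longrightarrow>
         vmax p d w R (ys @ j # acc) \<le> vmax p d w R (\<tau> @ j # acc)"
      using Suc.IH[OF cnt' sub' len', of "j # acc"] unfolding S' by blast
    show ?thesis
    proof (intro exI[of _ "ys @ [j]"] conjI allI impI)
      show "lawler p d w prec R (Suc f) U acc = (ys @ [j]) @ acc" using False bj ys(1) by simp
      show "distinct (ys @ [j])" "set (ys @ [j]) = ?S" using ys(2,3) jS by auto
    next
      assume acc: "respects_prec prec acc \<and> (\<forall>x\<in>?S. \<forall>a\<in>set acc. \<not> prec a x)"
      then have "respects_prec prec (j # acc)" using jS by (simp add: respects_prec_def) blast
      then show "respects_prec prec ((ys @ [j]) @ acc)" using ys(4) acc j_sink by auto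
    next
      fix \<tau> assume \<tau>: "distinct \<tau> \<and> set \<tau> = ?S \<and> respects_prec prec \<tau>"
      have "vmax p d w R (ys @ j # acc) \<le> vmax p d w R (remove1 j \<tau> @ j # acc)"
        using ys(5) \<tau> respects_prec_remove1[of prec \<tau> j] by (simp add: set_remove1_eq)
      also have "\<dots> \<le> vmax p d w R (\<tau> @ acc)"
        using Suc.prems irr nn \<tau> by (intro lawler_exchange[OF _ _ _ bj]) auto
      finally show "vmax p d w R ((ys @ [j]) @ acc) \<le> vmax p d w R (\<tau> @ acc)" by simp
    qed
  qed
qed

lemma solve1_minmax:
  assumes irr: "\<forall>i<n. \<not> prec i i"
    and tr: "\<forall>i<n. \<forall>j<n. \<forall>l<n. prec i j \<and> prec j l \<longrightarrow> prec i l"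
    and nn: "\<forall>s\<in>set R. \<forall>j<n. 0 \<le> p s j \<and> 0 \<le> w s j"
  shows "fst (solve1 p d w prec n R) \<in> schedules n prec"
    and "snd (solve1 p d w prec n R) = vmax p d w R (fst (solve1 p d w prec n R))"
    and "\<tau> \<in> schedules n prec \<Longrightarrow> snd (solve1 p d w prec n R) \<le> vmax p d w R \<tau>"
proof -
  have S: "set (map fst (mkU prec n n)) = {0..<n}" by (simp add: mkU_fst)
  obtain ys where ys: "lawler p d w prec R n (mkU prec n n) [] = ys" "distinct ys" "set ys = {0..<n}"
    "respects_prec prec ys"
    "\<forall>\<tau>. distinct \<tau> \<and> set \<tau> = {0..<n} \<and> respects_prec prec \<tau> \<longrightarrow> vmax p d w R ys \<le> vmax p d w R \<tau>"
    using lawler_correct[OF irr tr nn succ_counts_mkU, where f = n and acc = "[]"] S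
    by (auto simp: length_mkU respects_prec_def)
  have sol: "solve1 p d w prec n R = (ys, vmax p d w R ys)" using ys(1) by (simp add: solve1_def)
  show "fst (solve1 p d w prec n R) \<in> schedules n prec" using ys sol by (simp add: schedules_iff)
  show "snd (solve1 p d w prec n R) = vmax p d w R (fst (solve1 p d w prec n R))" using sol by simp
  show "snd (solve1 p d w prec n R) \<le> vmax p d w R \<tau>" if "\<tau> \<in> schedules n prec"
    using ys(5) that sol by (simp add: schedules_iff)
qed

lemma minsol_min:
  "Rs \<noteq> [] \<Longrightarrow> \<exists>R\<in>set Rs. minsol p d w pr n Rs = Some (solve1 p d w pr n R) \<and>
     (\<forall>R'\<in>set Rs. snd (solve1 p d w pr n R) \<le> snd (solve1 p d w pr n R'))"
proof (induction Rs)
  case Nil then show ?case by simp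
next
  case (Cons R Rs)
  show ?case
  proof (cases "Rs = []")
    case True then show ?thesis by simp
  next
    case False
    then obtain R0 where R0: "R0 \<in> set Rs" "minsol p d w pr n Rs = Some (solve1 p d w pr n R0)"
      "\<forall>R'\<in>set Rs. snd (solve1 p d w pr n R0) \<le> snd (solve1 p d w pr n R')"
      using Cons.IH by blast
    then show ?thesis
      by (cases "snd (solve1 p d w pr n R) \<le> snd (solve1 p d w pr n R0)")
        (fastforce simp: Let_def)+
  qed
qed

section \<open>The k-th largest value as a min-max over scenario sets\<close>

lemma kth_largest_counts:
  fixes f :: "nat \<Rightarrow> real"
  assumes k: "1 \<le> k" "k \<le> K"
  defines "v \<equiv> kth_largest k (map f [0..<K])"
  shows "card {i. i < K \<and> f i < v} \<le> K - k" and "K - k + 1 \<le> card {i. i < K \<and> f i \<le> v}"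
proof -
  let ?ys = "sort (map f [0..<K])"
  have len: "length ?ys = K" by simp
  have v: "v = ?ys ! (K - k)"
    unfolding v_def kth_largest_def using k by (simp add: rev_nth)
  have count: "card {i. i < K \<and> P (f i)} = card {i. i < K \<and> P (?ys ! i)}" for P
  proof -
    have "length (filter P (map f [0..<K])) = card {i. i < K \<and> P (f i)}"
      by (simp add: length_filter_conv_card)
        (metis (lifting) add_0 diff_zero nth_upt nth_map length_upt)
    moreover have "length (filter P ?ys) = card {i. i < K \<and> P (?ys ! i)}"
      by (simp only: length_filter_conv_card len)
    ultimately show ?thesis by (simp add: filter_sort)
  qed
  have "{i. i < K \<and> ?ys ! i < v} \<subseteq> {0..<K - k}"
  proof
    fix i assume i: "i \<in> {i. i < K \<and> ?ys ! i < v}"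
    show "i \<in> {0..<K - k}"
    proof (rule ccontr)
      assume "i \<notin> {0..<K - k}"
      then have "?ys ! (K - k) \<le> ?ys ! i" using i len by (intro sorted_nth_mono) auto
      then show False using i v by simp
    qed
  qed
  then have "card {i. i < K \<and> ?ys ! i < v} \<le> K - k"
    using card_mono[of "{0..<K - k}"] by fastforce
  then show "card {i. i < K \<and> f i < v} \<le> K - k" using count[of "\<lambda>x. x < v"] by simp
  have "{0..<K - k + 1} \<subseteq> {i. i < K \<and> ?ys ! i \<le> v}"
    using sorted_nth_mono[of ?ys _ "K - k"] len v k by auto
  then have "K - k + 1 \<le> card {i. i < K \<and> ?ys ! i \<le> v}"
    using card_mono[of "{i. i < K \<and> ?ys ! i \<le> v}" "{0..<K - k + 1}"] by simp
  then show "K - k + 1 \<le> card {i. i < K \<and> f i \<le> v}" using count[of "\<lambda>x. x \<le> v"] by simp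
qed

lemma kth_largest_le_some:
  fixes f :: "nat \<Rightarrow> real"
  assumes k: "1 \<le> k" "k \<le> K" and A: "A \<subseteq> {0..<K}" "card A = K - k + 1"
  shows "\<exists>s\<in>A. kth_largest k (map f [0..<K]) \<le> f s"
proof (rule ccontr)
  let ?v = "kth_largest k (map f [0..<K])"
  assume "\<not> ?thesis"
  then have "A \<subseteq> {i. i < K \<and> f i < ?v}" using A by auto
  then have "card A \<le> card {i. i < K \<and> f i < ?v}" by (intro card_mono) auto
  then show False using kth_largest_counts(1)[OF k, of f] A by simp
qed

lemma kth_largest_ge_all:
  fixes f :: "nat \<Rightarrow> real"
  assumes k: "1 \<le> k" "k \<le> K"
  obtains A where "A \<subseteq> {0..<K}" "card A = K - k + 1"
    "\<forall>s\<in>A. f s \<le> kth_largest k (map f [0..<K])"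
proof -
  let ?v = "kth_largest k (map f [0..<K])"
  obtain A where "A \<subseteq> {i. i < K \<and> f i \<le> ?v}" "card A = K - k + 1"
    using obtain_subset_with_card_n[OF kth_largest_counts(2)[OF k, of f]] by blast
  then show ?thesis using that[of A] by (auto simp: subset_iff)
qed

section \<open>Correctness of minquant\<close>

lemma quant_obj_le_vmax:
  assumes \<sigma>: "\<sigma> \<in> schedules n prec" and n: "1 \<le> n" and wnn: "\<forall>s<K. \<forall>j<n. 0 \<le> w s j"
    and k: "1 \<le> k" "k \<le> K" and R: "set R \<subseteq> {0..<K}" "card (set R) = K - k + 1"
  shows "quant_obj n K k p d w \<sigma> \<le> vmax p d w R \<sigma>"
proof -
  obtain s where s: "s \<in> set R"
    "quant_obj n K k p d w \<sigma> \<le> sched_cost n p d w \<sigma> s"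
    using kth_largest_le_some[OF k R] unfolding quant_obj_def by blast
  have "sched_cost n p d w \<sigma> s = fval p d w s \<sigma> 0"
    using fval_eq_sched_cost[OF \<sigma> n] wnn s(1) R(1) by auto
  also have "\<dots> \<le> vmax p d w R \<sigma>" using s(1) by (rule vmax_ge)
  finally show ?thesis using s(2) by simp
qed

lemma vmax_le_quant_obj:
  assumes \<pi>: "\<pi> \<in> schedules n prec" and n: "1 \<le> n" and wnn: "\<forall>s<K. \<forall>j<n. 0 \<le> w s j"
    and k: "1 \<le> k" "k \<le> K"
  obtains A where "A \<subseteq> {0..<K}" "card A = K - k + 1"
    "\<And>R. set R = A \<Longrightarrow> vmax p d w R \<pi> \<le> quant_obj n K k p d w \<pi>"
proof -
  let ?f = "sched_cost n p d w \<pi>"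
  obtain A where A: "A \<subseteq> {0..<K}" "card A = K - k + 1" "\<forall>s\<in>A. ?f s \<le> quant_obj n K k p d w \<pi>"
    using kth_largest_ge_all[OF k, of ?f] unfolding quant_obj_def by blast
  have fval_le: "fval p d w s \<pi> 0 \<le> quant_obj n K k p d w \<pi>" if "s \<in> A" for s
    using A that fval_eq_sched_cost[OF \<pi> n, of w s p d] wnn by auto
  obtain s0 where "s0 \<in> A" using A(2) k by fastforce
  then have "0 \<le> quant_obj n K k p d w \<pi>"
    using fval_le fval_nonneg[of p d w s0 \<pi> 0] by (meson order.trans)
  then show ?thesis using that A fval_le by (metis vmax_le)
qed

lemma scenario_lists_sound:
  "R \<in> set (combs m K (rng K)) \<Longrightarrow> set R \<subseteq> {0..<K} \<and> card (set R) = m"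
  using combs_sound[of "rng K" K R m] by (auto simp: rng_eq distinct_card)

lemma scenario_lists_complete:
  "A \<subseteq> {0..<K} \<Longrightarrow> card A = m \<Longrightarrow> \<exists>R\<in>set (combs m K (rng K)). set R = A"
  using combs_complete[of "rng K" K A m] by (intro bexI) (auto simp: rng_eq)

text \<open>minquant is optimal: its schedule is min-max optimal for the best scenario set R0,
  and by the quantile identity its objective is at most the min-max value of R0, which in
  turn is at most the objective of any other feasible schedule.\<close>
lemma minquant_correct:
  assumes V: "valid_instance n K p d w prec" and k: "1 \<le> k" "k \<le> K"
  shows "minquant_optimal n K k p d w prec (minquant p d w prec n K k)"
proof -
  have n: "1 \<le> n" and nn: "\<forall>s<K. \<forall>j<n. 0 \<le> p s j \<and> 0 \<le> d s j \<and> 0 \<le> w s j"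
    and irr: "\<forall>i<n. \<not> prec i i" and tr: "\<forall>i<n. \<forall>j<n. \<forall>l<n. prec i j \<and> prec j l \<longrightarrow> prec i l"
    using V unfolding valid_instance_def by blast+
  define Rs where "Rs = combs (K - k + 1) K (rng K)"
  have Rs: "set R \<subseteq> {0..<K}" "card (set R) = K - k + 1" if "R \<in> set Rs" for R
    using scenario_lists_sound that unfolding Rs_def by blast+
  have wnn: "\<forall>s<K. \<forall>j<n. 0 \<le> w s j" using nn by blast
  have nnR: "\<forall>s\<in>set R. \<forall>j<n. 0 \<le> p s j \<and> 0 \<le> w s j" if R: "R \<in> set Rs" for R
    using Rs(1)[OF R] nn by (meson atLeastLessThan_iff subsetD)
  have "K - k + 1 \<le> K" using k by linarith
  then have "Rs \<noteq> []" using scenario_lists_complete[of "{0..<K - k + 1}" K "K - k + 1"]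
    unfolding Rs_def by auto
  then obtain R0 where R0: "R0 \<in> set Rs" "minsol p d w prec n Rs = Some (solve1 p d w prec n R0)"
    "\<forall>R\<in>set Rs. snd (solve1 p d w prec n R0) \<le> snd (solve1 p d w prec n R)"
    using minsol_min by blast
  let ?\<sigma> = "fst (solve1 p d w prec n R0)"
  have mq: "minquant p d w prec n K k = ?\<sigma>"
    using R0(2) unfolding minquant_def Rs_def by (simp split: prod.split)
  note sol0 = solve1_minmax[OF irr tr nnR[OF R0(1)], where d = d]
  have "quant_obj n K k p d w ?\<sigma> \<le> quant_obj n K k p d w \<pi>" if \<pi>: "\<pi> \<in> schedules n prec" for \<pi>
  proof -
    obtain A where A: "A \<subseteq> {0..<K}" "card A = K - k + 1"
      "\<And>R. set R = A \<Longrightarrow> vmax p d w R \<pi> \<le> quant_obj n K k p d w \<pi>"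
      using vmax_le_quant_obj[OF \<pi> n wnn k] by blast
    obtain R where R: "R \<in> set Rs" "set R = A"
      using scenario_lists_complete[OF A(1,2)] unfolding Rs_def by blast
    have "quant_obj n K k p d w ?\<sigma> \<le> vmax p d w R0 ?\<sigma>"
      by (rule quant_obj_le_vmax[OF sol0(1) n wnn k Rs[OF R0(1)]])
    also have "\<dots> \<le> snd (solve1 p d w prec n R)" using sol0(2) R0(3) R(1) by simp
    also have "\<dots> \<le> vmax p d w R \<pi>" using solve1_minmax(3)[OF irr tr nnR[OF R(1)] \<pi>] .
    also have "\<dots> \<le> quant_obj n K k p d w \<pi>" using A(3) R(2) .
    finally show ?thesis .
  qed
  then show ?thesis using sol0(1) mq unfolding minquant_optimal_def by simp
qed

section \<open>Running time\<close>

text \<open>The step-counting functions of Defs are analysed for an access cost T of the input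
  data that is constantly 1, as in the theorem.\<close>

lemma T_consall_eq: "T_consall x L = length L + 1"
  by (induction L) auto

lemma T_rng_eq: "T_rng K = K + 1"
  by (induction K) auto

lemma T_combs_le:
  "length xs = l \<Longrightarrow> T_combs m l xs \<le> 6 * (m + 1) * (l choose m) + (if l < m then 1 else 0)"
proof (induction xs arbitrary: m l)
  case Nil then show ?case by (cases m) auto
next
  case (Cons x xs)
  show ?case
  proof (cases "m = 0 \<or> l < m")
    case True then show ?thesis using Cons.prems by (cases m) auto
  next
    case False
    then obtain m' where m: "m = Suc m'" by (cases m) auto
    let ?L = "length xs"
    have l: "l = Suc ?L" using Cons.prems by simp
    have "1 \<le> ?L choose m'" using False m l by (simp add: Suc_leI)
    moreover have "T_combs m' ?L xs \<le> 6 * (m' + 1) * (?L choose m')"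
      using Cons.IH[of ?L m'] False m l by simp
    moreover have "T_combs (Suc m') ?L xs \<le> 6 * (Suc m' + 1) * (?L choose Suc m') + 1"
      using Cons.IH[of ?L "Suc m'"] by (simp split: if_splits)
    moreover have "T_combs m l (x # xs) = T_combs m' ?L xs + ((?L choose m') + 1) +
        (T_combs (Suc m') ?L xs + ((?L choose m') + 1)) + 1"
      using m l False by (simp add: T_consall_eq T_append length_combs consall_map)
    moreover have "6 * (Suc m' + 1) * ((?L choose m') + (?L choose Suc m')) =
        6 * (m' + 1) * (?L choose m') + 6 * (?L choose m') + 6 * (Suc m' + 1) * (?L choose Suc m')"
      by (simp add: algebra_simps)
    ultimately have "T_combs m l (x # xs) \<le> 6 * (Suc m' + 1) * ((?L choose m') + (?L choose Suc m'))"
      by linarith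
    then show ?thesis using m l False by simp
  qed
qed

lemma T_cnt_eq: "(\<And>a b. T a b = 1) \<Longrightarrow> T_cnt T j m = 2 * m + 1"
  by (induction m) auto

lemma T_mkU_eq: "(\<And>a b. T a b = 1) \<Longrightarrow> T_mkU T n i = i * (2 * n + 2) + 1"
  by (induction i) (simp_all add: T_cnt_eq)

lemma T_sumP_eq: "(\<And>a b. T a b = 1) \<Longrightarrow> T_sumP T s U = 2 * length U + 1"
  by (induction T s U rule: T_sumP.induct) auto

lemma T_psums_eq: "(\<And>a b. T a b = 1) \<Longrightarrow> T_psums T R U = length R * (2 * length U + 2) + 1"
  by (induction R) (simp_all add: T_sumP_eq)

lemma length_psums: "length (psums p R U) = length R"
  by (induction R) auto

lemma T_gval_eq: "(\<And>a b. T a b = 1) \<Longrightarrow> T_gval T T j PS = 3 * length PS + 1"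
  by (induction T T j PS rule: T_gval.induct) auto

lemma T_bestj_le:
  "(\<And>a b. T a b = 1) \<Longrightarrow> T_bestj T T PS U \<le> length U * (3 * length PS + 2) + 1"
  by (induction T T PS U rule: T_bestj.induct) (auto simp: T_gval_eq)

lemma T_pick_le: "(\<And>a b. T a b = 1) \<Longrightarrow> T_pick T j U \<le> 2 * length U + 1"
  by (induction T j U rule: T_pick.induct) auto

lemma T_lawler_le:
  assumes unit: "\<And>a b. T a b = 1"
  shows "length U \<le> L \<Longrightarrow>
   T_lawler (p, T) (d, T) (w, T) (pr, T) R f U acc
     \<le> f * (9 * (length R + 1) * (L + 1)) + 1"
proof (induction f arbitrary: U acc)
  case 0 then show ?case by simp
next
  case (Suc f)
  let ?T = "T_lawler (p, T) (d, T) (w, T) (pr, T) R"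
  let ?PS = "psums p R U"
  show ?case
  proof (cases "U = []")
    case True then show ?thesis by simp
  next
    case False
    have psums: "T_psums T R U \<le> length R * (2 * L + 2) + 1"
      using Suc.prems by (simp add: T_psums_eq unit)
    have "T_bestj T T ?PS U \<le> length U * (3 * length R + 2) + 1"
      using T_bestj_le[of T ?PS U] unit by (simp add: length_psums)
    also have "\<dots> \<le> L * (3 * length R + 2) + 1"
      using mult_le_mono1[OF Suc.prems, of "3 * length R + 2"] by simp
    finally have bestj: "T_bestj T T ?PS U \<le> L * (3 * length R + 2) + 1" .
    have rest: "(case bestj w d ?PS U of None \<Rightarrow> 0
           | Some (j, g) \<Rightarrow> T_pick (snd (pr, T)) j U + ?T f (pick (fst (pr, T)) j U) (j # acc))
        \<le> 2 * L + 1 + (f * (9 * (length R + 1) * (L + 1)) + 1)"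
    proof (cases "bestj w d ?PS U")
      case (Some a)
      obtain j g where a: "a = (j, g)" by (cases a)
      have "T_pick T j U \<le> 2 * L + 1" using T_pick_le[of T j U] unit Suc.prems by simp
      moreover have "length (pick pr j U) \<le> L" using length_pick[of pr j U] Suc.prems by simp
      ultimately show ?thesis using Some a Suc.IH[of "pick pr j U" "j # acc"] by simp
    qed simp
    have "?T (Suc f) U acc = T_psums T R U + T_bestj T T ?PS U +
        (case bestj w d ?PS U of None \<Rightarrow> 0
           | Some (j, g) \<Rightarrow> T_pick (snd (pr, T)) j U + ?T f (pick (fst (pr, T)) j U) (j # acc)) + 1"
      using False by simp
    also have "\<dots> \<le> (length R * (2 * L + 2) + 1) + (L * (3 * length R + 2) + 1) +
          (2 * L + 1 + (f * (9 * (length R + 1) * (L + 1)) + 1)) + 1"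
      using psums bestj rest by linarith
    also have "\<dots> \<le> Suc f * (9 * (length R + 1) * (L + 1)) + 1"
      by (simp add: algebra_simps)
    finally show ?thesis .
  qed
qed

lemma length_lawler: "length (lawler p d w pr R f U acc) \<le> f + length acc"
proof (induction f arbitrary: U acc)
  case (Suc f)
  have "length (lawler p d w pr R f (pick pr j U) (j # acc)) \<le> f + length (j # acc)" for j
    by (rule Suc.IH)
  then show ?case by (auto split: option.split)
qed simp

lemma T_fval_eq: "(\<And>a b. T a b = 1) \<Longrightarrow> T_fval (p, T) (d, T) (w, T) s \<sigma> t = 4 * length \<sigma> + 1"
  by (induction \<sigma> arbitrary: t) (auto simp: Let_def)

lemma T_vmax_eq: "(\<And>a b. T a b = 1) \<Longrightarrow>
  T_vmax (p, T) (d, T) (w, T) R \<sigma> = length R * (4 * length \<sigma> + 2) + 1"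
  by (induction R) (auto simp: T_fval_eq)

lemma T_solve1_le:
  assumes unit: "\<And>a b. T a b = 1" and "1 \<le> n" "1 \<le> length R"
  shows "T_solve1 (p, T) (d, T) (w, T) (pr, T) n R
    \<le> 60 * (length R * n^2)"
proof -
  let ?m = "length R"
  have n: "n + 1 \<le> 2 * n" "1 \<le> n * n" "n \<le> n * n" and m: "?m + 1 \<le> 2 * ?m" using assms by auto
  have "length (lawler p d w pr R n (mkU pr n n) []) \<le> n"
    using length_lawler[of p d w pr R n "mkU pr n n" "[]"] by simp
  then have vmax: "T_vmax (p, T) (d, T) (w, T) R
      (lawler p d w pr R n (mkU pr n n) []) \<le> ?m * (4 * n + 2) + 1"
    by (simp add: T_vmax_eq unit)
  have lawler: "T_lawler (p, T) (d, T) (w, T) (pr, T) R n (mkU pr n n) []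
      \<le> n * (9 * (?m + 1) * (n + 1)) + 1"
    using T_lawler_le[of T "mkU pr n n" n] unit by (simp add: length_mkU)
  have "n * (9 * (?m + 1) * (n + 1)) \<le> n * (9 * (2 * ?m) * (2 * n))"
    using m n by (intro mult_le_mono mult_le_mono2 order.refl) auto
  then have lawler': "n * (9 * (?m + 1) * (n + 1)) \<le> 36 * (?m * (n * n))"
    by (simp add: algebra_simps)
  have "4 * n + 2 \<le> 6 * (n * n)" using n by linarith
  then have "?m * (4 * n + 2) \<le> ?m * (6 * (n * n))" by (rule mult_le_mono2)
  moreover have "n * n \<le> ?m * (n * n)" "1 \<le> ?m * (n * n)" using assms by simp_all
  ultimately show ?thesis
    using vmax lawler lawler'
    by (simp add: T_solve1_def T_mkU_eq unit power2_eq_square algebra_simps)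
qed

lemma T_snd_eq: "T_snd x = 0"
  by (cases x) simp

lemma T_minsol_le:
  assumes "\<And>a b. T a b = 1" "1 \<le> n" "1 \<le> m" "\<forall>R\<in>set Rs. length R = m"
  shows "T_minsol (p, T) (d, T) (w, T) (pr, T) n Rs
    \<le> length Rs * (61 * (m * n^2)) + 1"
  using assms(4)
proof (induction Rs)
  case (Cons R Rs)
  have "T_solve1 (p, T) (d, T) (w, T) (pr, T) n R \<le> 60 * (m * n^2)"
    using T_solve1_le[of T n R] assms Cons.prems by simp
  moreover have "1 \<le> m * n^2" using assms by simp
  moreover have "T_minsol (p, T) (d, T) (w, T) (pr, T) n (R # Rs) =
      T_solve1 (p, T) (d, T) (w, T) (pr, T) n R + T_minsol (p, T) (d, T) (w, T) (pr, T) n Rs + 1"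
    by (simp add: Let_def T_snd_eq split: option.split)
  moreover have "T_minsol (p, T) (d, T) (w, T) (pr, T) n Rs \<le> length Rs * (61 * (m * n^2)) + 1"
    using Cons by simp
  moreover have "length (R # Rs) * (61 * (m * n^2)) = length Rs * (61 * (m * n^2)) + 61 * (m * n^2)"
    by simp
  ultimately show ?case by linarith
qed simp

text \<open>(K choose (k-1)) (K-k+1) = K (K-1 choose (k-1)) lies between K and K^k; the lower
  bound absorbs the O(K) cost of building the scenario list.\<close>
lemma choose_times_bounds:
  assumes k: "1 \<le> k" "k \<le> K"
  shows "K \<le> (K choose (k - 1)) * (K - k + 1)" and "(K choose (k - 1)) * (K - k + 1) \<le> K ^ k"
proof -
  have absorb: "(K choose (k - 1)) * (K - k + 1) = K * (K - 1 choose (k - 1))"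
    using binomial_absorb_comp[of K "k - 1"] k by (simp add: mult.commute Suc_diff_le)
  have "1 \<le> K - 1 choose (k - 1)" using k by (simp add: Suc_leI)
  then show "K \<le> (K choose (k - 1)) * (K - k + 1)" unfolding absorb by simp
  have "K - 1 choose (k - 1) \<le> (K - 1) ^ (k - 1)" using k by (intro binomial_le_pow) simp
  also have "\<dots> \<le> K ^ (k - 1)" by (intro power_mono) auto
  finally have "K * (K - 1 choose (k - 1)) \<le> K * K ^ (k - 1)" by simp
  also have "\<dots> = K ^ k" using k by (simp add: power_eq_if)
  finally show "(K choose (k - 1)) * (K - k + 1) \<le> K ^ k" unfolding absorb .
qed

lemma T_minquant_le:
  assumes unit: "\<And>a b. T a b = 1" and n: "1 \<le> n" and k: "1 \<le> k" "k \<le> K"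
  shows "T_minquant (p, T) (d, T) (w, T) (pr, T) n K k
    \<le> 76 * ((K choose (k - 1)) * (K - k + 1) * n ^ 2)"
proof -
  define m where "m = K - k + 1"
  define Rs where "Rs = combs m K (rng K)"
  define B where "B = (K choose (k - 1)) * m"
  have m: "1 \<le> m" "m \<le> K" using k by (auto simp: m_def)
  have C: "K choose m = K choose (k - 1)"
    unfolding m_def using k binomial_symmetric[of "k - 1" K] by (simp add: Suc_diff_le)
  have KB: "K \<le> B" and "1 \<le> B"
    using choose_times_bounds(1)[OF k] k unfolding B_def m_def by simp_all
  then have X: "B \<le> B * n^2" "1 \<le> B * n^2" using n by simp_all
  have "T_combs m K (rng K) \<le> 6 * (m + 1) * (K choose m)"
    using T_combs_le[of "rng K" K m] m by (simp add: rng_eq)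
  also have "\<dots> \<le> 6 * (2 * m) * (K choose m)" using m by simp
  finally have combs: "T_combs m K (rng K) \<le> 12 * B" unfolding B_def C by (simp add: ac_simps)
  have "length R = m" if "R \<in> set Rs" for R
    using combs_sound[of "rng K" K R m] that unfolding Rs_def by (simp add: rng_eq)
  then have "T_minsol (p, T) (d, T) (w, T) (pr, T) n Rs \<le> length Rs * (61 * (m * n^2)) + 1"
    using T_minsol_le[of T, OF unit n m(1)] by blast
  also have "length Rs * (61 * (m * n^2)) = 61 * (B * n^2)"
    unfolding Rs_def B_def C[symmetric] by (simp add: length_combs rng_eq)
  finally have minsol: "T_minsol (p, T) (d, T) (w, T) (pr, T) n Rs \<le> 61 * (B * n^2) + 1" .
  have "T_minquant (p, T) (d, T) (w, T) (pr, T) n K k =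
      (K + 1) + T_combs m K (rng K) + T_minsol (p, T) (d, T) (w, T) (pr, T) n Rs"
    unfolding T_minquant_def Rs_def m_def by (simp add: T_rng_eq)
  also have "\<dots> \<le> 76 * (B * n^2)" using combs minsol KB X by linarith
  finally show ?thesis unfolding B_def m_def .
qed

theorem theorem5:
  "\<exists>c::nat. \<forall>n K k (p :: nat \<Rightarrow> nat \<Rightarrow> real) d w prec.
     valid_instance n K p d w prec \<and> 1 \<le> k \<and> k \<le> K \<longrightarrow>
       minquant_optimal n K k p d w prec (minquant p d w prec n K k) \<and>
       T_minquant (p, \<lambda>_ _. 1) (d, \<lambda>_ _. 1) (w, \<lambda>_ _. 1) (prec, \<lambda>_ _. 1) n K k
         \<le> c * ((K choose (k - 1)) * (K - k + 1) * n ^ 2) \<and>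
       T_minquant (p, \<lambda>_ _. 1) (d, \<lambda>_ _. 1) (w, \<lambda>_ _. 1) (prec, \<lambda>_ _. 1) n K k
         \<le> c * (K ^ k * n ^ 2)"
proof (intro exI[of _ 76] allI impI conjI)
  fix n K k and p :: "nat \<Rightarrow> nat \<Rightarrow> real" and d w prec
  assume "valid_instance n K p d w prec \<and> 1 \<le> k \<and> k \<le> K"
  then have V: "valid_instance n K p d w prec" and k: "1 \<le> k" "k \<le> K" and n: "1 \<le> n"
    unfolding valid_instance_def by blast+
  let ?T = "T_minquant (p, \<lambda>_ _. 1) (d, \<lambda>_ _. 1) (w, \<lambda>_ _. 1) (prec, \<lambda>_ _. 1) n K k"
  show "minquant_optimal n K k p d w prec (minquant p d w prec n K k)"
    using minquant_correct[OF V k] .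
  show bound: "?T \<le> 76 * ((K choose (k - 1)) * (K - k + 1) * n ^ 2)"
    using T_minquant_le[of "\<lambda>_ _. 1", OF _ n k] by simp
  have "(K choose (k - 1)) * (K - k + 1) * n ^ 2 \<le> K ^ k * n ^ 2"
    using choose_times_bounds(2)[OF k] by simp
  then show "?T \<le> 76 * (K ^ k * n ^ 2)" using bound by linarith
qed

end
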